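(* Consider a symmetric two-player game with pure strategy set $I=\{1,\dots,N\}$ and payoff matrix $\mathbf{U}=(u_{ij})$. Let $I'\subset I$. For $\mathbf{x}\in S_N$ define $\mathbf{x}'\in\mathbb{R}_+^N$ by $x'_i=x_i$ if $i\in I'$ and $x'_i=0$ otherwise, and let $x(I')=\sum_{i\in I'}x_i$; define $\mathbf{y}'$, $y(I')$ similarly. Let $(\mathbf{x},\mathbf{y})$ be a Nash equilibrium with $x(I')\,y(I')>0$, and assume that for all $i,j\in I'$, $$[\mathbf{U}(\mathbf{y}-\mathbf{y}')]_i=[\mathbf{U}(\mathbf{y}-\mathbf{y}')]_j\quad\text{and}\quad[\mathbf{U}(\mathbf{x}-\mathbf{x}')]_i=[\mathbf{U}(\mathbf{x}-\mathbf{x}')]_j.$$ Then for all $i,j\in I'$: if $x'_i>0$ then $(\mathbf{U}\mathbf{y}')_i\ge(\mathbf{U}\mathbf{y}')_j$, and if $y'_i>0$ then $(\mathbf{U}\mathbf{x}')_i\ge(\mathbf{U}\mathbf{x}')_j$.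
   Context: $S_N=\{\mathbf{x}\in\mathbb{R}_+^N:\sum_i x_i=1\}$. In the symmetric game, for the mixed profile $(\mathbf{x},\mathbf{y})$ the row player gets $\mathbf{x}\cdot\mathbf{U}\mathbf{y}$ and the column player gets $\mathbf{y}\cdot\mathbf{U}\mathbf{x}$; a Nash equilibrium is a pair of mutual best replies. *)

theory Defs
  imports "HOL-Analysis.Analysis"
begin

text \<open>Pure strategies are indexed by a finite type 'n (so N = CARD('n)).
  The payoff matrix U is a real 'n x 'n matrix, mixed strategies are vectors in real^'n.\<close>

definition mixed_strats :: "(real ^ 'n::finite) set" where
  "mixed_strats = {x. (\<forall>i. 0 \<le> x $ i) \<and> (\<Sum>i\<in>UNIV. x $ i) = 1}"

definition nash_eq :: "real ^ 'n ^ 'n \<Rightarrow> real ^ 'n::finite \<Rightarrow> real ^ 'n \<Rightarrow> bool" where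
  "nash_eq U x y \<longleftrightarrow> x \<in> mixed_strats \<and> y \<in> mixed_strats \<and>
     (\<forall>x2 \<in> mixed_strats. x2 \<bullet> (U *v y) \<le> x \<bullet> (U *v y)) \<and>
     (\<forall>y2 \<in> mixed_strats. y2 \<bullet> (U *v x) \<le> y \<bullet> (U *v x))"

definition restr :: "'n::finite set \<Rightarrow> real ^ 'n \<Rightarrow> real ^ 'n" where
  "restr I' x = (\<chi> i. if i \<in> I' then x $ i else 0)"

definition mass :: "'n::finite set \<Rightarrow> real ^ 'n \<Rightarrow> real" where
  "mass I' x = (\<Sum>i\<in>I'. x $ i)"

end

theory Submission
  imports Defs
begin

text \<open>At a Nash equilibrium every pure strategy played with positive probability is a best reply,
  so it maximises the payoff vector against the opponent's strategy. Writing
  \<open>U y = U (y - y') + U y'\<close>, the first summand is constant on \<open>I'\<close> by hypothesis, hence the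
  same comparisons hold for \<open>U y'\<close>.\<close>

lemma mixed_strats_move_mass:
  fixes x :: "real ^ 'n::finite"
  assumes "x \<in> mixed_strats" and "i \<noteq> j"
  shows "x + (x $ i) *\<^sub>R (axis j 1 - axis i 1) \<in> mixed_strats"
proof -
  let ?x2 = "x + (x $ i) *\<^sub>R (axis j 1 - axis i 1)"
  have comp: "?x2 $ k = x $ k + x $ i * ((if k = j then 1 else 0) - (if k = i then 1 else 0))" for k
    by (simp add: axis_def)
  have "0 \<le> ?x2 $ k" for k
    using assms unfolding comp mixed_strats_def by (cases "k = i"; cases "k = j") auto
  moreover have "(\<Sum>k\<in>UNIV. ?x2 $ k) = 1"
    using assms(1) unfolding comp mixed_strats_def
    by (simp add: sum.distrib sum_subtractf sum_distrib_left[symmetric] algebra_simps)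
  ultimately show ?thesis by (simp add: mixed_strats_def)
qed

text \<open>Shifting the weight of \<open>i\<close> onto \<open>j\<close> changes the payoff by \<open>x\<^sub>i (v\<^sub>j - v\<^sub>i)\<close>.\<close>

lemma best_reply_support_maximal:
  fixes x v :: "real ^ 'n::finite"
  assumes x: "x \<in> mixed_strats"
    and best: "\<forall>x2 \<in> mixed_strats. x2 \<bullet> v \<le> x \<bullet> v"
    and xi: "x $ i > 0"
  shows "v $ j \<le> v $ i"
proof (cases "i = j")
  case False
  let ?x2 = "x + (x $ i) *\<^sub>R (axis j 1 - axis i 1)"
  have "?x2 \<bullet> v \<le> x \<bullet> v"
    using best mixed_strats_move_mass[OF x False] by blast
  moreover have "?x2 \<bullet> v = x \<bullet> v + x $ i * (v $ j - v $ i)"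
    by (simp add: inner_add_left inner_diff_left inner_axis' algebra_simps)
  ultimately have "x $ i * (v $ j - v $ i) \<le> 0" by simp
  with xi show ?thesis by (simp add: mult_le_0_iff)
qed simp

lemma restr_payoff_le_iff:
  fixes U :: "real ^ 'n ^ 'n" and z :: "real ^ 'n::finite"
  assumes "(U *v (z - restr I' z)) $ i = (U *v (z - restr I' z)) $ j"
  shows "(U *v restr I' z) $ j \<le> (U *v restr I' z) $ i \<longleftrightarrow> (U *v z) $ j \<le> (U *v z) $ i"
proof -
  have "U *v z = U *v (z - restr I' z) + U *v restr I' z"
    by (simp add: matrix_vector_right_distrib[symmetric])
  with assms show ?thesis by (metis add_le_cancel_left vector_add_component)
qed

lemma restr_pos_imp_pos: "restr I' x $ i > 0 \<Longrightarrow> x $ i > 0"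
  by (simp add: restr_def split: if_splits)

theorem lemma4:
  fixes U :: "real ^ 'n ^ 'n" and x y :: "real ^ 'n::finite" and I' :: "'n set"
  assumes nash: "nash_eq U x y"
    and pos: "mass I' x * mass I' y > 0"
    and eqy: "\<forall>i\<in>I'. \<forall>j\<in>I'. (U *v (y - restr I' y)) $ i = (U *v (y - restr I' y)) $ j"
    and eqx: "\<forall>i\<in>I'. \<forall>j\<in>I'. (U *v (x - restr I' x)) $ i = (U *v (x - restr I' x)) $ j"
  shows "\<forall>i\<in>I'. \<forall>j\<in>I'.
           (restr I' x $ i > 0 \<longrightarrow> (U *v restr I' y) $ i \<ge> (U *v restr I' y) $ j) \<and>
           (restr I' y $ i > 0 \<longrightarrow> (U *v restr I' x) $ i \<ge> (U *v restr I' x) $ j)"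
proof (intro ballI conjI impI)
  fix i j assume i: "i \<in> I'" and j: "j \<in> I'"
  show "(U *v restr I' y) $ j \<le> (U *v restr I' y) $ i" if "restr I' x $ i > 0"
    using best_reply_support_maximal[of x "U *v y" i j] restr_pos_imp_pos[OF that]
      restr_payoff_le_iff[of U y I' i j] eqy i j nash
    unfolding nash_eq_def by blast
  show "(U *v restr I' x) $ j \<le> (U *v restr I' x) $ i" if "restr I' y $ i > 0"
    using best_reply_support_maximal[of y "U *v x" i j] restr_pos_imp_pos[OF that]
      restr_payoff_le_iff[of U x I' i j] eqx i j nash
    unfolding nash_eq_def by blast
qed

end
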